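(* Let $(X,d)$ be a complete metric space, let $F:(0,\infty)\to\mathbb{R}$ be nondecreasing, and let $\varphi:(0,\infty)\to(0,\infty)$ satisfy: for every strictly decreasing sequence $(t_n)_{n\in\mathbb{N}}\subset(0,\infty)$, $\lim_{n\to\infty}\varphi(t_n)=0$ implies $\lim_{n\to\infty}t_n=0$. Let $T:X\to X$ satisfy, for all $x,y\in X$ with $Tx\neq Ty$, $$\varphi(d(x,y))+F(d(Tx,Ty))\le F(d(x,y)).$$ Then $T$ is a Picard operator.
   Context: $T$ is a Picard operator if $T$ has a unique fixed point $u\in X$ and for every $x\in X$ the sequence $(T^nx)_{n\in\mathbb{N}}$ converges to $u$. *)

theory Defs
  imports "HOL-Analysis.Analysis"
begin

definition picard_operator :: "('a::metric_space \<Rightarrow> 'a) \<Rightarrow> bool" where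
  "picard_operator T \<longleftrightarrow>
     (\<exists>u. T u = u \<and> (\<forall>v. T v = v \<longrightarrow> v = u) \<and>
          (\<forall>x. (\<lambda>n. (T ^^ n) x) \<longlonglongrightarrow> u))"

end

theory Submission
  imports Defs
begin

text \<open>
  An \<open>F\<close>-contraction is a contractive map satisfying the Meir--Keeler condition, and Meir--Keeler
  maps on complete spaces are Picard operators. For the Meir--Keeler condition at level \<open>\<epsilon>\<close>:
  if it failed, there would be pairs of distances \<open>\<epsilon> < d(Tx,Ty) < d(x,y)\<close> with \<open>d(x,y)\<close>
  arbitrarily close to \<open>\<epsilon>\<close>, which can be chained into a strictly decreasing sequence \<open>a\<^sub>n > \<epsilon>\<close>
  with \<open>\<phi>(a\<^sub>n) \<le> F(a\<^sub>n) - F(a\<^sub>n\<^sub>+\<^sub>1)\<close>. Telescoping makes \<open>\<Sum> \<phi>(a\<^sub>n)\<close> bounded, so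
  \<open>\<phi>(a\<^sub>n) \<rightarrow> 0\<close>, and the hypothesis on \<open>\<phi>\<close> forces \<open>a\<^sub>n \<rightarrow> 0\<close>, which is absurd.
\<close>

text \<open>
  With the strict lower bound \<open>\<epsilon> < d(x,y)\<close> the Meir--Keeler condition does not imply
  contractivity, hence the separate assumption.
\<close>
locale meir_keeler =
  fixes T :: "'a::metric_space \<Rightarrow> 'a"
  assumes contractive: "\<And>x y. x \<noteq> y \<Longrightarrow> dist (T x) (T y) < dist x y"
    and meir_keeler_cond:
      "\<And>\<epsilon>. \<epsilon> > 0 \<Longrightarrow> \<exists>\<delta>>0. \<forall>x y. \<epsilon> < dist x y \<and> dist x y < \<epsilon> + \<delta> \<longrightarrow> dist (T x) (T y) \<le> \<epsilon>"
begin

lemma dist_le: "dist (T x) (T y) \<le> dist x y"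
  using contractive[of x y] by (cases "x = y") auto

lemma fixpoint_unique: "T u = u \<Longrightarrow> T v = v \<Longrightarrow> u = v"
  using contractive[of u v] by (cases "u = v") auto

lemma dist_iterates_Suc_tendsto_zero:
  "(\<lambda>n. dist ((T ^^ n) x) ((T ^^ Suc n) x)) \<longlonglongrightarrow> 0"
proof -
  define t where "t = (\<lambda>n. dist ((T ^^ n) x) ((T ^^ Suc n) x))"
  have t_Suc_le: "t (Suc n) \<le> t n" for n
    using dist_le by (simp add: t_def)
  have t_Suc_less: "t (Suc n) < t n" if "t n > 0" for n
    using contractive that by (simp add: t_def)
  have "decseq t" "\<forall>n. 0 \<le> t n"
    using t_Suc_le by (auto intro: decseq_SucI simp: t_def)
  then obtain L where L: "t \<longlonglongrightarrow> L" "\<forall>n. L \<le> t n"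
    by (rule decseq_convergent)
  have "L \<ge> 0"
    using L(1) by (rule LIMSEQ_le_const) (simp add: t_def)
  have "L = 0"
  proof (rule ccontr)
    assume "L \<noteq> 0"
    with \<open>L \<ge> 0\<close> have "L > 0" by simp
    have t_gt: "L < t n" for n
    proof -
      have "t n > 0" using L(2) \<open>L > 0\<close> by (meson less_le_trans)
      then show ?thesis using L(2) t_Suc_less[of n] by (meson le_less_trans)
    qed
    obtain \<delta> where "\<delta> > 0" and \<delta>: "\<forall>x y. L < dist x y \<and> dist x y < L + \<delta> \<longrightarrow> dist (T x) (T y) \<le> L"
      using meir_keeler_cond[OF \<open>L > 0\<close>] by blast
    obtain n where "norm (t n - L) < \<delta>"
      using LIMSEQ_D[OF L(1) \<open>\<delta> > 0\<close>] by blast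
    then have "t n < L + \<delta>"
      by simp
    then have "t (Suc n) \<le> L"
      using \<delta> t_gt[of n] by (simp add: t_def)
    with t_gt[of "Suc n"] show False by simp
  qed
  with L(1) show ?thesis
    unfolding t_def by simp
qed

text \<open>
  Once \<open>d(x\<^sub>N, x\<^sub>N\<^sub>+\<^sub>1) < \<delta>' \<le> min \<delta> \<epsilon>\<close>, the whole tail of the orbit stays within
  \<open>\<epsilon> + \<delta>'\<close> of \<open>x\<^sub>N\<close>: applying \<open>T\<close> moves a point at distance \<open>< \<epsilon> + \<delta>\<close> from \<open>x\<^sub>N\<close> to
  distance \<open>\<le> \<epsilon>\<close> from \<open>x\<^sub>N\<^sub>+\<^sub>1\<close>, and the triangle inequality through \<open>x\<^sub>N\<^sub>+\<^sub>1\<close> brings it back.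
\<close>
lemma Cauchy_iterates: "Cauchy (\<lambda>n. (T ^^ n) x)"
proof (rule metric_CauchyI)
  define xs where "xs n = (T ^^ n) x" for n
  have xs_Suc: "xs (Suc n) = T (xs n)" for n
    by (simp add: xs_def)
  fix e :: real
  assume "e > 0"
  define \<epsilon> where "\<epsilon> = e / 4"
  have "\<epsilon> > 0" using \<open>e > 0\<close> by (simp add: \<epsilon>_def)
  obtain \<delta> where "\<delta> > 0" and \<delta>: "\<forall>x y. \<epsilon> < dist x y \<and> dist x y < \<epsilon> + \<delta> \<longrightarrow> dist (T x) (T y) \<le> \<epsilon>"
    using meir_keeler_cond[OF \<open>\<epsilon> > 0\<close>] by blast
  define \<delta>' where "\<delta>' = min \<delta> \<epsilon>"
  have "\<delta>' > 0" using \<open>\<delta> > 0\<close> \<open>\<epsilon> > 0\<close> by (simp add: \<delta>'_def)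
  obtain N where N: "dist (xs N) (xs (Suc N)) < \<delta>'"
    using LIMSEQ_D[OF dist_iterates_Suc_tendsto_zero \<open>\<delta>' > 0\<close>] by (fastforce simp: xs_def)
  have tail: "dist (xs N) (xs (N + j)) < \<epsilon> + \<delta>'" for j
  proof (induction j)
    case 0
    then show ?case using \<open>\<epsilon> > 0\<close> \<open>\<delta>' > 0\<close> by simp
  next
    case (Suc j)
    have "dist (T (xs N)) (T (xs (N + j))) \<le> \<epsilon>"
    proof (cases "\<epsilon> < dist (xs N) (xs (N + j))")
      case True
      with Suc.IH \<delta> show ?thesis by (simp add: \<delta>'_def)
    next
      case False
      then show ?thesis using dist_le[of "xs N" "xs (N + j)"] by linarith
    qed
    moreover have "dist (xs N) (xs (N + Suc j)) \<le> dist (xs N) (xs (Suc N)) + dist (T (xs N)) (T (xs (N + j)))"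
      using dist_triangle by (simp add: xs_Suc)
    ultimately show ?case using N by linarith
  qed
  show "\<exists>M. \<forall>m\<ge>M. \<forall>n\<ge>M. dist ((T ^^ m) x) ((T ^^ n) x) < e"
  proof (intro exI allI impI)
    fix m n
    assume "N \<le> m" "N \<le> n"
    then obtain i j where ij: "m = N + i" "n = N + j"
      using le_Suc_ex by blast
    have "dist (xs m) (xs n) \<le> dist (xs N) (xs m) + dist (xs N) (xs n)"
      by (rule dist_triangle3)
    also have "\<dots> < 2 * (\<epsilon> + \<delta>')"
      using tail[of i] tail[of j] ij by simp
    also have "\<dots> \<le> e"
      by (simp add: \<epsilon>_def \<delta>'_def)
    finally show "dist ((T ^^ m) x) ((T ^^ n) x) < e"
      by (simp add: xs_def)
  qed
qed

lemma iterates_limit_fixpoint: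
  assumes "(\<lambda>n. (T ^^ n) x) \<longlonglongrightarrow> v"
  shows "T v = v"
proof -
  have "(\<lambda>n. dist ((T ^^ n) x) v) \<longlonglongrightarrow> 0"
    using assms by (rule tendsto_dist_iff[THEN iffD1])
  then have "(\<lambda>n. dist (T ((T ^^ n) x)) (T v)) \<longlonglongrightarrow> 0"
    by (rule Lim_null_comparison[rotated]) (simp add: dist_le)
  then have "(\<lambda>n. T ((T ^^ n) x)) \<longlonglongrightarrow> T v"
    by (rule tendsto_dist_iff[THEN iffD2])
  moreover have "(\<lambda>n. T ((T ^^ n) x)) \<longlonglongrightarrow> v"
    using LIMSEQ_Suc[OF assms] by simp
  ultimately show ?thesis
    using LIMSEQ_unique by blast
qed

end

lemma meir_keeler_picard_operator:
  fixes T :: "'a::complete_space \<Rightarrow> 'a"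
  assumes "meir_keeler T"
  shows "picard_operator T"
proof -
  interpret meir_keeler T by (fact assms)
  have iterates_tendsto: "\<exists>v. T v = v \<and> (\<lambda>n. (T ^^ n) x) \<longlonglongrightarrow> v" for x
  proof -
    obtain v where "(\<lambda>n. (T ^^ n) x) \<longlonglongrightarrow> v"
      using Cauchy_iterates[of x] Cauchy_convergent_iff convergent_def by blast
    with iterates_limit_fixpoint show ?thesis by blast
  qed
  then obtain u where u: "T u = u" by blast
  show ?thesis
    unfolding picard_operator_def
  proof (intro exI conjI allI impI)
    show "T u = u" by (fact u)
    show "v = u" if "T v = v" for v
      using fixpoint_unique that u by blast
    show "(\<lambda>n. (T ^^ n) x) \<longlonglongrightarrow> u" for x
      using iterates_tendsto[of x] fixpoint_unique u by blast
  qed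
qed

locale F_contraction =
  fixes T :: "'a::metric_space \<Rightarrow> 'a" and F \<phi> :: "real \<Rightarrow> real"
  assumes F_mono: "mono_on {0<..} F"
    and \<phi>_pos: "\<And>t. t > 0 \<Longrightarrow> \<phi> t > 0"
    and \<phi>_prop: "\<And>t. (\<And>n. t n > 0) \<Longrightarrow> (\<And>n. t (Suc n) < t n) \<Longrightarrow>
                  (\<lambda>n. \<phi> (t n)) \<longlonglongrightarrow> 0 \<Longrightarrow> t \<longlonglongrightarrow> 0"
    and contr: "\<And>x y. T x \<noteq> T y \<Longrightarrow> \<phi> (dist x y) + F (dist (T x) (T y)) \<le> F (dist x y)"
begin

lemma contractive:
  assumes "x \<noteq> y"
  shows "dist (T x) (T y) < dist x y"
proof (cases "T x = T y")
  case True
  with assms show ?thesis by simp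
next
  case False
  have F_less: "F (dist (T x) (T y)) < F (dist x y)"
    using contr[OF False] \<phi>_pos[of "dist x y"] assms by simp
  show ?thesis
  proof (rule ccontr)
    assume "\<not> ?thesis"
    then have "F (dist x y) \<le> F (dist (T x) (T y))"
      using False assms by (intro mono_onD[OF F_mono]) auto
    with F_less show False by simp
  qed
qed

lemma descent_tendsto_zero:
  assumes pos: "\<And>n. a n > 0" and dec: "\<And>n. a (Suc n) < a n"
    and descent: "\<And>n. \<phi> (a n) \<le> F (a n) - F (a (Suc n))"
  shows "a \<longlonglongrightarrow> 0"
proof -
  have "decseq a" "\<forall>n. 0 \<le> a n"
    using pos dec by (auto intro: decseq_SucI less_imp_le)
  then obtain L where L: "a \<longlonglongrightarrow> L" "\<forall>n. L \<le> a n"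
    by (rule decseq_convergent)
  show ?thesis
  proof (cases "L > 0")
    case True
    have "(\<Sum>k\<le>n. \<phi> (a k)) \<le> F (a 0) - F L" for n
    proof -
      have "(\<Sum>k\<le>n. \<phi> (a k)) \<le> (\<Sum>k<Suc n. F (a k) - F (a (Suc k)))"
        using descent by (simp add: lessThan_Suc_atMost sum_mono)
      also have "\<dots> = F (a 0) - F (a (Suc n))"
        by (rule sum_lessThan_telescope')
      also have "\<dots> \<le> F (a 0) - F L"
        using True L(2) pos by (simp add: mono_onD[OF F_mono])
      finally show ?thesis .
    qed
    moreover have "\<phi> (a n) \<ge> 0" for n
      using \<phi>_pos[OF pos] less_imp_le by blast
    ultimately have "summable (\<lambda>n. \<phi> (a n))"
      by (intro bounded_imp_summable)
    then show ?thesis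
      using \<phi>_prop pos dec summable_LIMSEQ_zero by blast
  next
    case False
    moreover have "0 \<le> L"
      using L(1) by (rule LIMSEQ_le_const) (use pos in \<open>auto intro: less_imp_le\<close>)
    ultimately show ?thesis
      using L(1) by simp
  qed
qed

lemma meir_keeler_cond:
  assumes "\<epsilon> > 0"
  shows "\<exists>\<delta>>0. \<forall>x y. \<epsilon> < dist x y \<and> dist x y < \<epsilon> + \<delta> \<longrightarrow> dist (T x) (T y) \<le> \<epsilon>"
proof (rule ccontr)
  assume not_mk: "\<not> ?thesis"
  define P where "P = (\<lambda>(a, b). \<epsilon> < b \<and> b < a \<and> \<phi> a + F b \<le> F a)"
  have bad_pair: "\<exists>a b. P (a, b) \<and> a < \<epsilon> + \<delta>" if "\<delta> > 0" for \<delta>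
  proof -
    obtain x y where xy: "\<epsilon> < dist x y" "dist x y < \<epsilon> + \<delta>" "\<epsilon> < dist (T x) (T y)"
      using not_mk \<open>\<delta> > 0\<close> by (auto simp: not_le)
    then have "T x \<noteq> T y" using \<open>\<epsilon> > 0\<close> by auto
    with xy show ?thesis
      using contr contractive[of x y] unfolding P_def
      by (intro exI[of _ "dist x y"] exI[of _ "dist (T x) (T y)"]) auto
  qed
  obtain p where p: "\<And>n. P (p n)" and chain: "\<And>n. fst (p (Suc n)) < snd (p n)"
  proof -
    have "\<exists>f. \<forall>n. P (f n) \<and> fst (f (Suc n)) < snd (f n)"
    proof (rule dependent_nat_choice)
      show "\<exists>p. P p"
        using bad_pair[of 1] by auto
      show "\<exists>q. P q \<and> fst q < snd p" if "P p" for p and n :: nat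
        using bad_pair[of "snd p - \<epsilon>"] that by (auto simp: P_def split: prod.splits)
    qed
    with that show thesis by blast
  qed
  define a where "a n = fst (p n)" for n
  have a_gt: "\<epsilon> < a n" for n
    using p[of n] by (auto simp: a_def P_def split: prod.splits)
  have "a \<longlonglongrightarrow> 0"
  proof (rule descent_tendsto_zero)
    fix n
    obtain b where b: "p n = (a n, b)" by (metis a_def prod.collapse)
    then have "\<epsilon> < b" "b < a n" "\<phi> (a n) + F b \<le> F (a n)" and "a (Suc n) < b"
      using p[of n] chain[of n] by (auto simp: P_def a_def)
    moreover have "F (a (Suc n)) \<le> F b"
      using \<open>a (Suc n) < b\<close> a_gt[of "Suc n"] \<open>\<epsilon> > 0\<close> by (intro mono_onD[OF F_mono]) auto
    ultimately show "a n > 0" "a (Suc n) < a n" "\<phi> (a n) \<le> F (a n) - F (a (Suc n))"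
      using \<open>\<epsilon> > 0\<close> by auto
  qed
  then obtain n where "norm (a n - 0) < \<epsilon>"
    using LIMSEQ_D[OF _ \<open>\<epsilon> > 0\<close>] by blast
  with a_gt[of n] show False by simp
qed

sublocale meir_keeler T
  using contractive meir_keeler_cond by unfold_locales

end

theorem mainTheorem8:
  fixes T :: "'a::complete_space \<Rightarrow> 'a"
    and F :: "real \<Rightarrow> real"
    and \<phi> :: "real \<Rightarrow> real"
  assumes F_mono: "mono_on {0<..} F"
    and \<phi>_pos: "\<forall>t>0. \<phi> t > 0"
    and \<phi>_prop: "\<forall>t :: nat \<Rightarrow> real. (\<forall>n. t n > 0) \<and> (\<forall>n. t (Suc n) < t n) \<longrightarrow>
                 ((\<lambda>n. \<phi> (t n)) \<longlonglongrightarrow> 0) \<longrightarrow> (t \<longlonglongrightarrow> 0)"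
    and contr: "\<forall>x y. T x \<noteq> T y \<longrightarrow> \<phi> (dist x y) + F (dist (T x) (T y)) \<le> F (dist x y)"
  shows "picard_operator T"
proof -
  interpret F_contraction T F \<phi>
    using assms by unfold_locales blast+
  show ?thesis
    by (rule meir_keeler_picard_operator) unfold_locales
qed

end
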